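(* If the diagonal gain matrix $\Theta=\texttt{diag}(\theta_1,\dots,\theta_n)$ is chosen large enough that $\theta_i > \zeta_{N_{d1},i} + \lambda_{3,i}^{-1} \zeta_{N_{d2},i}$ for every $i$, then $P(t) \geq 0$ for all $t \geq t_0$.
   Context: Consider a fully actuated multirotor with configuration $q=[p;\phi]\in\mathbb{R}^n$ ($n=6$; position $p$, Euler angles $\phi$) whose dynamics are written as $M(q)\ddot q = G(q)Av + h(q,\dot q) + d(t)$, where $M(q)=\texttt{blkdiag}(mI_3,Q^\top JQ)$ is symmetric, $G(q)=\texttt{blkdiag}(R,Q^\top)$, $A\in\mathbb{R}^{6\times 6}$ is the constant invertible rotor-thrust-to-wrench map, $v$ is the shifted rotor-thrust input with symmetric bound $-\overline v\le v\le \overline v$, and $d(t)$ is an external disturbance. For a vector $x$, $\operatorname{Tanh}(x)$ denotes the vector $[\tanh(x_1);\dots;\tanh(x_n)]$ and $\operatorname{Cosh}(x)$ denotes the diagonal matrix $\texttt{diag}(\cosh(x_1),\dots,\cosh(x_n))$. With desired trajectory $q_d(t)$, error variables are $e_1=q_d-q$, $e_2=\dot e_1+\Lambda_1\operatorname{Tanh}(e_1)+e_f$, $\dot e_f=-\Gamma_1 e_2+\operatorname{Tanh}(e_1)-\Gamma_2 e_f$, and the controller is $v=\Gamma_1\operatorname{Tanh}(z)$, $\dot z=\operatorname{Cosh}^2(z)\Gamma_1^{-1}A^{-1}G^{-1}\big(M\Gamma_1\{\Lambda_2\operatorname{Tanh}(e_2)+\Lambda_3 e_2+\Gamma_2 e_2\}+\Theta\operatorname{sgn}(e_2)-\dot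 G A v\big)$, with all of $\Lambda_1,\Lambda_2,\Lambda_3,\Gamma_1,\Gamma_2,\Theta$ positive definite diagonal gain matrices ($\lambda_{3,i}$ denotes the $i$-th diagonal entry of $\Lambda_3$). Define $r=\dot e_2+\Lambda_2\operatorname{Tanh}(e_2)+\Lambda_3 e_2$, $h_d=h(q_d,\dot q_d)$, and $N_d=\dot M\ddot q_d+M\dddot q_d-\dot h_d-\dot d$. It is assumed that $\zeta_{N_{d1},i}=\sup_t|N_{d,i}(t)|$ and $\zeta_{N_{d2},i}=\sup_t|\dot N_{d,i}(t)|$ exist (are finite) for each $i$. The function $P$ is defined by $\dot P=-r^\top(N_d-\Theta\operatorname{sgn}(e_2))$ with initial value $P(t_0)=\sum_{i=1}^n\theta_i|e_{2i}(t_0)|-e_2(t_0)^\top N_d(t_0)$. *)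

theory Defs
  imports "HOL-Analysis.Analysis"
begin

definition vTanh :: "real^'n \<Rightarrow> real^'n" where
  "vTanh x = (\<chi> i. tanh (x $ i))"

definition vsgn :: "real^'n \<Rightarrow> real^'n" where
  "vsgn x = (\<chi> i. sgn (x $ i))"

text \<open>Diagonal gain matrices diag(c) applied to a vector, c = vector of diagonal entries.\<close>
definition dmul :: "real^'n \<Rightarrow> real^'n \<Rightarrow> real^'n" where
  "dmul c x = (\<chi> i. c $ i * x $ i)"

definition rise_r :: "real^'n \<Rightarrow> real^'n \<Rightarrow> (real \<Rightarrow> real^'n) \<Rightarrow> (real \<Rightarrow> real^'n) \<Rightarrow> real \<Rightarrow> real^'n" where
  "rise_r lam2 lam3 e2 de2 t = de2 t + dmul lam2 (vTanh (e2 t)) + dmul lam3 (e2 t)"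

definition rise_P :: "real^'n \<Rightarrow> real^'n \<Rightarrow> real^'n \<Rightarrow> (real \<Rightarrow> real^'n) \<Rightarrow> (real \<Rightarrow> real^'n)
    \<Rightarrow> (real \<Rightarrow> real^'n) \<Rightarrow> real \<Rightarrow> real \<Rightarrow> real" where
  "rise_P lam2 lam3 theta e2 de2 Nd t0 t =
     (\<Sum>i\<in>UNIV. theta $ i * \<bar>e2 t0 $ i\<bar>) - e2 t0 \<bullet> Nd t0
     - integral {t0..t} (\<lambda>s. rise_r lam2 lam3 e2 de2 s \<bullet> (Nd s - dmul theta (vsgn (e2 s))))"

end

theory Submission
  imports Defs
begin

text \<open>
  Both the integrand of P and P(t0) split into a sum over the components, so it suffices to
  bound each component. For e = e2 i and N = Nd i, integration by parts turns the integral of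
  e' N into the boundary term e N minus the integral of e N', and sgn(e) e' integrates to |e|.
  What remains inside the integral is (lambda2 tanh e + lambda3 e)(N - theta sgn e) + e N',
  which is pointwise nonpositive once theta dominates |N| and lambda3 theta dominates
  lambda3 |N| + |N'|; this is exactly what the gain condition provides. The boundary term
  e N - theta |e| at time t is nonpositive for the same reason, which leaves P(t) \<ge> 0.
\<close>

lemma has_real_derivative_vec_nth:
  assumes "(f has_vector_derivative f') (at x within S)"
  shows "((\<lambda>x. f x $ i) has_real_derivative f' $ i) (at x within S)"
  using bounded_linear.has_vector_derivative[OF bounded_linear_vec_nth assms, of i]
  by (simp add: has_real_derivative_iff_has_vector_derivative)

lemma has_integral_sgn_mult_deriv:
  fixes f f' :: "real \<Rightarrow> real"
  assumes "a \<le> b"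
    and f: "\<And>s. s \<in> {a..b} \<Longrightarrow> (f has_real_derivative f' s) (at s within {a..b})"
    and f'_cont: "continuous_on {a..b} f'"
  shows "((\<lambda>s. sgn (f s) * f' s) has_integral \<bar>f b\<bar> - \<bar>f a\<bar>) {a..b}"
proof -
  \<comment> \<open>|f| need not be differentiable where f vanishes: integrate the derivatives of the
    smooth approximations sqrt(f^2 + eps^2) instead and pass to the limit by dominated convergence.\<close>
  define \<epsilon> :: "nat \<Rightarrow> real" where "\<epsilon> k = 1 / real (Suc k)" for k
  define \<phi> where "\<phi> k = (\<lambda>s. sqrt ((f s)\<^sup>2 + (\<epsilon> k)\<^sup>2))" for k
  define g where "g k s = f s / \<phi> k s * f' s" for k s
  have \<epsilon>_lim: "\<epsilon> \<longlonglongrightarrow> 0"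
    unfolding \<epsilon>_def using LIMSEQ_Suc[OF lim_inverse_n'] by simp
  have \<phi>_pos: "0 < \<phi> k s" for k s
    by (simp add: \<phi>_def \<epsilon>_def add_nonneg_pos)
  have \<phi>_lim: "(\<lambda>k. \<phi> k s) \<longlonglongrightarrow> \<bar>f s\<bar>" for s
  proof -
    have "(\<lambda>k. \<phi> k s) \<longlonglongrightarrow> sqrt ((f s)\<^sup>2 + 0\<^sup>2)"
      unfolding \<phi>_def by (intro tendsto_intros \<epsilon>_lim)
    then show ?thesis
      by simp
  qed
  have g_integral: "(g k has_integral \<phi> k b - \<phi> k a) {a..b}" for k
  proof (rule fundamental_theorem_of_calculus[OF \<open>a \<le> b\<close>])
    fix s assume s: "s \<in> {a..b}"
    have "((\<lambda>s. (f s)\<^sup>2 + (\<epsilon> k)\<^sup>2) has_real_derivative 2 * f s * f' s) (at s within {a..b})"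
      using f[OF s] by (auto intro!: derivative_eq_intros)
    from DERIV_chain2[OF DERIV_real_sqrt this] \<phi>_pos[of k s]
    have "(\<phi> k has_real_derivative inverse (\<phi> k s) / 2 * (2 * f s * f' s)) (at s within {a..b})"
      by (simp add: \<phi>_def o_def)
    then show "(\<phi> k has_vector_derivative g k s) (at s within {a..b})"
      by (simp add: g_def field_simps has_real_derivative_iff_has_vector_derivative)
  qed
  have g_bound: "norm (g k s) \<le> \<bar>f' s\<bar>" for k s
  proof -
    have "\<bar>f s\<bar> \<le> \<phi> k s"
      unfolding \<phi>_def by (intro real_le_rsqrt) simp
    then have "\<bar>f s / \<phi> k s\<bar> \<le> 1"
      using \<phi>_pos[of k s] by simp
    then show ?thesis
      using mult_right_mono[of "\<bar>f s / \<phi> k s\<bar>" 1 "\<bar>f' s\<bar>"] by (simp add: g_def abs_mult)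
  qed
  have g_lim: "(\<lambda>k. g k s) \<longlonglongrightarrow> sgn (f s) * f' s" for s
  proof -
    have "(\<lambda>k. f s / \<phi> k s) \<longlonglongrightarrow> sgn (f s)"
    proof (cases "f s = 0")
      case False
      then have "(\<lambda>k. f s / \<phi> k s) \<longlonglongrightarrow> f s / \<bar>f s\<bar>"
        by (intro tendsto_intros \<phi>_lim) auto
      then show ?thesis
        by (simp only: real_sgn_eq)
    qed simp
    then show ?thesis
      unfolding g_def by (intro tendsto_intros)
  qed
  have f'_integrable: "(\<lambda>s. \<bar>f' s\<bar>) integrable_on {a..b}"
    by (intro integrable_continuous_interval continuous_intros f'_cont)
  have g_integrable: "g k integrable_on {a..b}" for k
    using g_integral by blast
  note limit = dominated_convergence[OF g_integrable f'_integrable g_bound g_lim]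
  have "(\<lambda>k. integral {a..b} (g k)) \<longlonglongrightarrow> \<bar>f b\<bar> - \<bar>f a\<bar>"
    unfolding integral_unique[OF g_integral] by (intro tendsto_intros \<phi>_lim)
  then have "integral {a..b} (\<lambda>s. sgn (f s) * f' s) = \<bar>f b\<bar> - \<bar>f a\<bar>"
    using limit(2) LIMSEQ_unique by blast
  then show ?thesis
    using limit(1) by (metis has_integral_integral)
qed

lemma mult_diff_sgn_le: "(y::real) * (n - \<theta> * sgn y) \<le> \<bar>y\<bar> * (\<bar>n\<bar> - \<theta>)"
proof -
  have "y * n \<le> \<bar>y\<bar> * \<bar>n\<bar>"
    by (metis abs_ge_self abs_mult)
  moreover have "y * sgn y = \<bar>y\<bar>"
    by (simp add: abs_sgn)
  ultimately show ?thesis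
    by (simp add: algebra_simps)
qed

lemma sgn_tanh_real [simp]: "sgn (tanh x) = sgn (x::real)"
  by (cases "x > 0"; cases "x < 0") auto

lemma rise_remainder_le:
  fixes x n n' :: real
  assumes "0 \<le> l2" "0 \<le> l3" "\<bar>n\<bar> \<le> \<theta>" "l3 * \<bar>n\<bar> + \<bar>n'\<bar> \<le> l3 * \<theta>"
  shows "(l2 * tanh x + l3 * x) * (n - \<theta> * sgn x) \<le> x * n'"
proof -
  have "tanh x * (n - \<theta> * sgn x) \<le> \<bar>tanh x\<bar> * (\<bar>n\<bar> - \<theta>)"
    by (metis mult_diff_sgn_le sgn_tanh_real)
  also have "\<dots> \<le> 0"
    using assms(3) by (simp add: mult_nonneg_nonpos)
  finally have tanh_part: "l2 * (tanh x * (n - \<theta> * sgn x)) \<le> 0"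
    using assms(1) by (simp add: mult_nonneg_nonpos)
  have "l3 * (x * (n - \<theta> * sgn x)) \<le> l3 * (\<bar>x\<bar> * (\<bar>n\<bar> - \<theta>))"
    using mult_diff_sgn_le assms(2) by (rule mult_left_mono)
  also have "\<dots> = \<bar>x\<bar> * (l3 * \<bar>n\<bar> - l3 * \<theta>)"
    by (simp add: algebra_simps)
  also have "\<dots> \<le> \<bar>x\<bar> * (- \<bar>n'\<bar>)"
    using assms(4) by (intro mult_left_mono) auto
  also have "\<dots> \<le> x * n'"
    using abs_ge_minus_self[of "x * n'"] by (simp add: abs_mult)
  finally show ?thesis
    using tanh_part by (simp add: algebra_simps)
qed

lemma rise_component_integral_le:
  fixes e e' N N' :: "real \<Rightarrow> real"
  assumes "a \<le> b"
    and e: "\<And>s. s \<in> {a..b} \<Longrightarrow> (e has_real_derivative e' s) (at s within {a..b})"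
    and e'_cont: "continuous_on {a..b} e'"
    and N: "\<And>s. s \<in> {a..b} \<Longrightarrow> (N has_real_derivative N' s) (at s within {a..b})"
    and gains: "0 \<le> l2" "0 \<le> l3"
    and N_le: "\<And>s. s \<in> {a..b} \<Longrightarrow> \<bar>N s\<bar> \<le> \<theta>"
    and N'_le: "\<And>s. s \<in> {a..b} \<Longrightarrow> l3 * \<bar>N s\<bar> + \<bar>N' s\<bar> \<le> l3 * \<theta>"
  shows "(\<lambda>s. (e' s + l2 * tanh (e s) + l3 * e s) * (N s - \<theta> * sgn (e s))) integrable_on {a..b}"
    and "integral {a..b} (\<lambda>s. (e' s + l2 * tanh (e s) + l3 * e s) * (N s - \<theta> * sgn (e s)))
      \<le> \<theta> * \<bar>e a\<bar> - e a * N a"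
proof -
  define f where "f s = (e' s + l2 * tanh (e s) + l3 * e s) * (N s - \<theta> * sgn (e s))" for s
  \<comment> \<open>The integrand plus theta sgn(e) e', written with absolute values so that it is
    visibly continuous.\<close>
  define C where
    "C s = e' s * N s + (l2 * tanh (e s) + l3 * e s) * N s - \<theta> * (l2 * \<bar>tanh (e s)\<bar> + l3 * \<bar>e s\<bar>)"
    for s
  have C_eq: "C s = e' s * N s + (l2 * tanh (e s) + l3 * e s) * (N s - \<theta> * sgn (e s))" for s
    by (simp add: C_def abs_sgn[of "e s"] abs_sgn[of "tanh (e s)"] algebra_simps)
  have f_eq: "f = (\<lambda>s. C s - \<theta> * (sgn (e s) * e' s))"
    by (simp add: fun_eq_iff f_def C_eq algebra_simps)
  have C_integrable: "C integrable_on {a..b}"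
  proof -
    have "continuous_on {a..b} e" "continuous_on {a..b} N"
      using DERIV_continuous_on e N by blast+
    then show ?thesis
      unfolding C_def by (intro integrable_continuous_interval continuous_intros e'_cont) simp_all
  qed
  have product_rule: "((\<lambda>s. e' s * N s + e s * N' s) has_integral e b * N b - e a * N a) {a..b}"
  proof (rule fundamental_theorem_of_calculus[OF \<open>a \<le> b\<close>])
    fix s assume "s \<in> {a..b}"
    then show "((\<lambda>s. e s * N s) has_vector_derivative e' s * N s + e s * N' s) (at s within {a..b})"
      using e N by (auto simp: has_real_derivative_iff_has_vector_derivative[symmetric]
          intro!: derivative_eq_intros)
  qed
  have "integral {a..b} C \<le> e b * N b - e a * N a"
  proof (rule integral_le[OF C_integrable has_integral_integrable[OF product_rule],
        unfolded integral_unique[OF product_rule]])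
    fix s assume "s \<in> {a..b}"
    then show "C s \<le> e' s * N s + e s * N' s"
      unfolding C_eq using rise_remainder_le[OF gains N_le N'_le] by (simp add: add_mono)
  qed
  moreover have "e b * N b \<le> \<theta> * \<bar>e b\<bar>"
  proof -
    have "e b * N b \<le> \<bar>e b\<bar> * \<bar>N b\<bar>"
      by (metis abs_ge_self abs_mult)
    also have "\<dots> \<le> \<bar>e b\<bar> * \<theta>"
      using N_le[of b] \<open>a \<le> b\<close> by (simp add: mult_left_mono)
    finally show ?thesis
      by (simp add: mult.commute)
  qed
  moreover have "(f has_integral integral {a..b} C - \<theta> * (\<bar>e b\<bar> - \<bar>e a\<bar>)) {a..b}"
    unfolding f_eq
    by (intro has_integral_diff has_integral_mult_right integrable_integral C_integrable
        has_integral_sgn_mult_deriv[OF \<open>a \<le> b\<close> e e'_cont])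
  ultimately show "f integrable_on {a..b}" "integral {a..b} f \<le> \<theta> * \<bar>e a\<bar> - e a * N a"
    unfolding f_def by (auto simp: integral_unique has_integral_integrable algebra_simps)
qed

lemma gain_condition_bounds:
  fixes n n' :: "real \<Rightarrow> real"
  assumes "0 < l3" "bdd_above (range (\<lambda>t. \<bar>n t\<bar>))" "bdd_above (range (\<lambda>t. \<bar>n' t\<bar>))"
    and gain: "(SUP t. \<bar>n t\<bar>) + (SUP t. \<bar>n' t\<bar>) / l3 < \<theta>"
  shows "\<bar>n s\<bar> \<le> \<theta>" and "l3 * \<bar>n s\<bar> + \<bar>n' s\<bar> \<le> l3 * \<theta>"
proof -
  have n_le: "\<bar>n s\<bar> \<le> (SUP t. \<bar>n t\<bar>)" and n'_le: "\<bar>n' s\<bar> \<le> (SUP t. \<bar>n' t\<bar>)"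
    using assms(2,3) by (auto intro: cSUP_upper)
  then have "0 \<le> (SUP t. \<bar>n' t\<bar>) / l3"
    using \<open>0 < l3\<close> by (auto intro: order_trans[OF abs_ge_zero])
  then show "\<bar>n s\<bar> \<le> \<theta>"
    using n_le gain by linarith
  have "l3 * \<bar>n s\<bar> + \<bar>n' s\<bar> \<le> l3 * ((SUP t. \<bar>n t\<bar>) + (SUP t. \<bar>n' t\<bar>) / l3)"
    using \<open>0 < l3\<close> n_le n'_le by (simp add: distrib_left mult_left_mono add_mono)
  also have "\<dots> \<le> l3 * \<theta>"
    using \<open>0 < l3\<close> gain by simp
  finally show "l3 * \<bar>n s\<bar> + \<bar>n' s\<bar> \<le> l3 * \<theta>" .
qed

lemma rise_r_inner_eq:
  "rise_r lam2 lam3 e2 de2 s \<bullet> (Nd s - dmul theta (vsgn (e2 s))) =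
    (\<Sum>i\<in>UNIV. (de2 s $ i + lam2 $ i * tanh (e2 s $ i) + lam3 $ i * e2 s $ i)
      * (Nd s $ i - theta $ i * sgn (e2 s $ i)))"
  by (simp add: inner_vec_def rise_r_def dmul_def vTanh_def vsgn_def)

theorem lemma1:
  fixes e2 de2 Nd dNd :: "real \<Rightarrow> real^'n"
    and lam2 lam3 theta :: "real^'n"
    and t0 :: real
  assumes dim: "CARD('n) = 6"
    and gains_pos: "\<forall>i. lam2 $ i > 0 \<and> lam3 $ i > 0 \<and> theta $ i > 0"
    and e2_deriv: "\<forall>t\<ge>t0. (e2 has_vector_derivative de2 t) (at t within {t0..})"
    and de2_cont: "continuous_on {t0..} de2"
    and Nd_deriv: "\<forall>t. (Nd has_vector_derivative dNd t) (at t)"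
    and dNd_cont: "continuous_on UNIV dNd"
    and Nd_bdd: "\<forall>i. bdd_above (range (\<lambda>t. \<bar>Nd t $ i\<bar>))"
    and dNd_bdd: "\<forall>i. bdd_above (range (\<lambda>t. \<bar>dNd t $ i\<bar>))"
    and theta_big: "\<forall>i. theta $ i > (SUP t. \<bar>Nd t $ i\<bar>) + (SUP t. \<bar>dNd t $ i\<bar>) / lam3 $ i"
  shows "\<forall>t\<ge>t0. rise_P lam2 lam3 theta e2 de2 Nd t0 t \<ge> 0"
proof (intro allI impI)
  fix t assume "t0 \<le> t"
  have e2': "(e2 has_vector_derivative de2 s) (at s within {t0..t})" if "s \<in> {t0..t}" for s
    using e2_deriv that by (auto intro: has_vector_derivative_within_subset)
  have Nd': "(Nd has_vector_derivative dNd s) (at s within {t0..t})" for s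
    using Nd_deriv by (auto intro: has_vector_derivative_at_within)
  have de2_cont': "continuous_on {t0..t} de2"
    using de2_cont by (rule continuous_on_subset) auto
  have lam2: "0 \<le> lam2 $ i" and lam3: "0 < lam3 $ i" for i
    using gains_pos by (auto intro: less_imp_le)
  note bounds = gain_condition_bounds[OF lam3 Nd_bdd[rule_format] dNd_bdd[rule_format] theta_big[rule_format]]
  define f where "f i s = (de2 s $ i + lam2 $ i * tanh (e2 s $ i) + lam3 $ i * e2 s $ i)
      * (Nd s $ i - theta $ i * sgn (e2 s $ i))" for i s
  note component = rise_component_integral_le[OF \<open>t0 \<le> t\<close>
      has_real_derivative_vec_nth[OF e2'] continuous_on_component[OF de2_cont']
      has_real_derivative_vec_nth[OF Nd'] lam2 less_imp_le[OF lam3] bounds]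
  have f_integrable: "f i integrable_on {t0..t}" for i
    unfolding f_def by (rule component(1))
  have f_integral_le: "integral {t0..t} (f i) \<le> theta $ i * \<bar>e2 t0 $ i\<bar> - e2 t0 $ i * Nd t0 $ i" for i
    unfolding f_def by (rule component(2))
  have "integral {t0..t} (\<lambda>s. rise_r lam2 lam3 e2 de2 s \<bullet> (Nd s - dmul theta (vsgn (e2 s))))
      = (\<Sum>i\<in>UNIV. integral {t0..t} (f i))"
    by (simp add: rise_r_inner_eq f_def[symmetric] integral_sum f_integrable)
  also have "\<dots> \<le> (\<Sum>i\<in>UNIV. theta $ i * \<bar>e2 t0 $ i\<bar> - e2 t0 $ i * Nd t0 $ i)"
    by (intro sum_mono f_integral_le)
  also have "\<dots> = (\<Sum>i\<in>UNIV. theta $ i * \<bar>e2 t0 $ i\<bar>) - e2 t0 \<bullet> Nd t0"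
    by (simp add: inner_vec_def sum_subtractf)
  finally show "rise_P lam2 lam3 theta e2 de2 Nd t0 t \<ge> 0"
    by (simp add: rise_P_def)
qed

end
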